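(* Fix $\ell \in \mathbb{R}_{>0}$. The map $f \mapsto C(f)$ is one-to-one when restricted to barcodes of the form $f = \sum_{i=1}^n x^{\alpha_i}y^{\ell}$ (with $n\ge 0$ and $\alpha_i\in\mathbb{R}$ arbitrary), i.e. barcodes all of whose bars have lifespan $\ell$.
   Context: A barcode is a finite formal sum $f = \sum_{i=1}^n x^{\alpha_i}y^{\ell_i}$ with $\alpha_i \in \mathbb{R}$, $\ell_i \in \mathbb{R}_{>0}$ (a finite multiset of bars $x^{\alpha_i}y^{\ell_i}$). Its critical series is $C(f) = \sum_i x^{\alpha_i} - \sum_i x^{\alpha_i+\ell_i}$, a finite integer combination of symbols $x^g$, $g\in\mathbb{R}$. *)

theory Defs
  imports "HOL-Library.Multiset" Complex_Main
begin

text \<open>A barcode is a finite multiset of bars x^alpha y^l, represented as pairs (alpha, l)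
  with l > 0.\<close>
type_synonym barcode = "(real \<times> real) multiset"

definition is_barcode :: "barcode \<Rightarrow> bool" where
  "is_barcode f \<longleftrightarrow> (\<forall>b \<in># f. snd b > 0)"

text \<open>The critical series C(f) = sum_i x^alpha_i - sum_i x^(alpha_i + l_i), a finite integer
  combination of symbols x^g, represented by its coefficient function g -> coefficient of x^g.\<close>
definition critical_series :: "barcode \<Rightarrow> real \<Rightarrow> int" where
  "critical_series f g =
     int (size (filter_mset (\<lambda>b. fst b = g) f))
   - int (size (filter_mset (\<lambda>b. fst b + snd b = g) f))"

end

theory Submission
  imports Defs
begin

text \<open>When every bar has lifespan \<open>l\<close>, the coefficient of \<open>x\<^sup>g\<close> in \<open>C(f)\<close> is the number of bars
  born at \<open>g\<close> minus the number born at \<open>g - l\<close>. Hence the difference \<open>d\<close> of the birth counts of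
  two such barcodes with the same critical series satisfies \<open>d(a) = d(a - l)\<close>; as \<open>d\<close> has finite
  support, evaluating at the least point of the support gives a contradiction unless \<open>d = 0\<close>.\<close>

lemma critical_series_constant_lifespan:
  assumes "\<forall>b \<in># f. snd b = l"
  shows "critical_series f g = int (count f (g, l)) - int (count f (g - l, l))"
proof -
  have "filter_mset (\<lambda>b. fst b = g) f = filter_mset (\<lambda>b. b = (g, l)) f"
    by (rule filter_mset_cong) (use assms in auto)
  moreover have "filter_mset (\<lambda>b. fst b + snd b = g) f = filter_mset (\<lambda>b. b = (g - l, l)) f"
    by (rule filter_mset_cong) (use assms in auto)
  ultimately show ?thesis
    unfolding critical_series_def filter_eq_replicate_mset by simp
qed

lemma finite_support_shift_invariant_eq_zero:
  fixes d :: "'a::linordered_ab_group_add \<Rightarrow> 'b::zero"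
  assumes "l > 0" and "finite {a. d a \<noteq> 0}" and "\<And>a. d a = d (a - l)"
  shows "d a = 0"
proof (rule ccontr)
  define S where "S = {a. d a \<noteq> 0}"
  assume "d a \<noteq> 0"
  then have "S \<noteq> {}" unfolding S_def by blast
  then have "Min S \<in> S" using assms(2) unfolding S_def by (intro Min_in)
  then have "Min S - l \<in> S" using assms(3) unfolding S_def by simp
  then have "Min S \<le> Min S - l" using assms(2) unfolding S_def by simp
  then show False using assms(1) by simp
qed

lemma multiset_eq_constant_snd:
  assumes "\<forall>b \<in># f1. snd b = l" and "\<forall>b \<in># f2. snd b = l"
    and "\<And>a. count f1 (a, l) = count f2 (a, l)"
  shows "f1 = f2"
proof (rule multiset_eqI)
  fix x :: "'a \<times> 'b"
  show "count f1 x = count f2 x"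
  proof (cases "snd x = l")
    case True
    then show ?thesis using assms(3)[of "fst x"] by (metis prod.collapse)
  next
    case False
    then have "x \<notin># f1" "x \<notin># f2" using assms(1,2) by auto
    then show ?thesis by (simp add: not_in_iff)
  qed
qed

theorem proposition11:
  fixes l :: real
  assumes "l > 0"
  shows "inj_on critical_series
           {f :: barcode. is_barcode f \<and> (\<forall>b \<in># f. snd b = l)}"
proof (rule inj_onI)
  fix f1 f2 :: barcode
  assume "f1 \<in> {f. is_barcode f \<and> (\<forall>b \<in># f. snd b = l)}"
    and "f2 \<in> {f. is_barcode f \<and> (\<forall>b \<in># f. snd b = l)}"
    and same: "critical_series f1 = critical_series f2"
  then have l1: "\<forall>b \<in># f1. snd b = l" and l2: "\<forall>b \<in># f2. snd b = l" by auto
  define d where "d a = int (count f1 (a, l)) - int (count f2 (a, l))" for a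
  have shift: "d a = d (a - l)" for a
    using same critical_series_constant_lifespan[OF l1, of a]
      critical_series_constant_lifespan[OF l2, of a]
    unfolding d_def by simp
  have "{a. d a \<noteq> 0} \<subseteq> fst ` set_mset (f1 + f2)"
  proof
    fix a
    assume "a \<in> {a. d a \<noteq> 0}"
    then have "(a, l) \<in># f1 + f2" unfolding d_def by (auto simp: not_in_iff)
    then show "a \<in> fst ` set_mset (f1 + f2)" by force
  qed
  then have "finite {a. d a \<noteq> 0}" by (rule finite_subset) simp
  then have "d a = 0" for a
    using finite_support_shift_invariant_eq_zero assms shift by metis
  then show "f1 = f2"
    using multiset_eq_constant_snd[OF l1 l2] unfolding d_def by simp
qed

end
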